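(* Let $\beta>1$, $n\in\mathbb{N}$, $C_\beta=2+\frac{2(\beta-1)^2}{2\beta-1}$ and $$h(t,\tau)=2\big(nt-\tau|\tau|^{\beta-1}\big)^2-C_\beta(t-\tau)\big(n^2t-\tau|\tau|^{2(\beta-1)}\big).$$ Then $h(t,\tau)\le0$ for all real $t,\tau$ with $|t|>n^{1/(\beta-1)}$ and $|\tau|\le n^{1/(\beta-1)}$. *)

theory Defs
  imports Complex_Main
begin

definition C_beta :: "real \<Rightarrow> real" where
  "C_beta \<beta> = 2 + 2 * (\<beta> - 1)^2 / (2 * \<beta> - 1)"

definition h_fun :: "real \<Rightarrow> nat \<Rightarrow> real \<Rightarrow> real \<Rightarrow> real" where
  "h_fun \<beta> n t \<tau> =
     2 * (real n * t - \<tau> * \<bar>\<tau>\<bar> powr (\<beta> - 1))^2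
     - C_beta \<beta> * (t - \<tau>) * ((real n)^2 * t - \<tau> * \<bar>\<tau>\<bar> powr (2 * (\<beta> - 1)))"

end

theory Submission
  imports Defs
begin

(* Write p = \<beta> - 1, a = |\<tau>|^p and D = C_beta \<beta> - 2 = 2p^2/(2p+1). Expanding, h is minus a
   quadratic form in (\<tau>, t) whose mixed coefficient is nonnegative, so it suffices to treat
   \<tau>, t \<ge> 0. As a function of t it is then a convex quadratic, and it is nonnegative and
   nondecreasing for t beyond N = n^(1/p) as soon as it is nonnegative at t = N. With y = \<tau>/N
   that boundary value is n^2 N^2 (D (1 - y)(1 - y^(2p+1)) - 2 y (1 - y^p)^2), and its sign
   reduces, under y = e^(-w), to (p+1)^2 (cosh (p w) - 1) \<le> p^2 (cosh ((p+1) w) - 1), i.e. to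
   (cosh (c w) - 1)/c^2 being nondecreasing in c > 0. *)

lemma scaled_sinh_le:
  fixes a b w :: real
  assumes "0 \<le> a" "a \<le> b" "0 \<le> w"
  shows "b * sinh (a * w) \<le> a * sinh (b * w)"
proof -
  let ?g = "\<lambda>x. a * sinh (b * x) - b * sinh (a * x)"
  have "?g 0 \<le> ?g w"
  proof (rule DERIV_nonneg_imp_nondecreasing[OF \<open>0 \<le> w\<close>])
    fix x :: real
    assume "0 \<le> x" "x \<le> w"
    have "cosh (a * x) \<le> cosh (b * x)"
      using assms \<open>0 \<le> x\<close> by (simp add: cosh_real_nonneg_le_iff mult_right_mono)
    then have "0 \<le> a * b * (cosh (b * x) - cosh (a * x))"
      using assms by simp
    moreover have "(?g has_real_derivative a * b * (cosh (b * x) - cosh (a * x))) (at x)"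
      by (auto intro!: derivative_eq_intros simp: algebra_simps)
    ultimately show "\<exists>y. (?g has_real_derivative y) (at x) \<and> 0 \<le> y"
      by blast
  qed
  then show ?thesis
    by simp
qed

lemma scaled_cosh_le:
  fixes a b w :: real
  assumes "0 \<le> a" "a \<le> b" "0 \<le> w"
  shows "b\<^sup>2 * (cosh (a * w) - 1) \<le> a\<^sup>2 * (cosh (b * w) - 1)"
proof -
  let ?g = "\<lambda>x. a\<^sup>2 * (cosh (b * x) - 1) - b\<^sup>2 * (cosh (a * x) - 1)"
  have "?g 0 \<le> ?g w"
  proof (rule DERIV_nonneg_imp_nondecreasing[OF \<open>0 \<le> w\<close>])
    fix x :: real
    assume "0 \<le> x" "x \<le> w"
    have "0 \<le> a * b * (a * sinh (b * x) - b * sinh (a * x))"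
      using scaled_sinh_le[OF assms(1,2) \<open>0 \<le> x\<close>] assms by simp
    moreover have
      "(?g has_real_derivative a * b * (a * sinh (b * x) - b * sinh (a * x))) (at x)"
      by (auto intro!: derivative_eq_intros simp: algebra_simps power2_eq_square)
    ultimately show "\<exists>y. (?g has_real_derivative y) (at x) \<and> 0 \<le> y"
      by blast
  qed
  then show ?thesis
    by simp
qed

lemma sq_one_minus_powr_le:
  fixes p y :: real
  assumes "0 < p" "0 < y" "y \<le> 1"
  shows "(2 * p + 1) * y * (1 - y powr p)\<^sup>2 \<le> p\<^sup>2 * (1 - y) * (1 - y * (y powr p)\<^sup>2)"
proof -
  define w where "w = - ln y"
  define b where "b = y powr p"
  have "0 \<le> w"
    using assms by (simp add: w_def)
  have "0 < b"
    using assms by (simp add: b_def)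
  have exp_w: "exp (- w) = y"
    using assms by (simp add: w_def)
  have exp_pw: "exp (- (p * w)) = b"
    using assms by (simp add: w_def b_def powr_def)
  have "exp (p * w) = 1 / b"
    using exp_pw by (metis exp_minus inverse_eq_divide inverse_inverse_eq)
  with exp_pw have cosh_pw: "cosh (p * w) = (1 / b + b) / 2"
    by (simp add: cosh_field_def)
  have exp_p1w: "exp (- ((p + 1) * w)) = y * b"
    by (simp add: exp_w[symmetric] exp_pw[symmetric] distrib_right flip: exp_add)
  then have "exp ((p + 1) * w) = 1 / (y * b)"
    by (metis exp_minus inverse_eq_divide inverse_inverse_eq)
  with exp_p1w have cosh_p1w: "cosh ((p + 1) * w) = (1 / (y * b) + y * b) / 2"
    by (simp add: cosh_field_def)
  have "2 * y * b * ((p + 1)\<^sup>2 * (cosh (p * w) - 1))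
      \<le> 2 * y * b * (p\<^sup>2 * (cosh ((p + 1) * w) - 1))"
    using scaled_cosh_le[of p "p + 1" w] assms \<open>0 \<le> w\<close> \<open>0 < b\<close> by simp
  moreover have "2 * y * b * ((p + 1)\<^sup>2 * (cosh (p * w) - 1)) = (p + 1)\<^sup>2 * y * (1 - b)\<^sup>2"
    using \<open>0 < y\<close> \<open>0 < b\<close> unfolding cosh_pw by (simp add: field_simps power2_eq_square)
  moreover have "2 * y * b * (p\<^sup>2 * (cosh ((p + 1) * w) - 1)) = p\<^sup>2 * (1 - y * b)\<^sup>2"
    using \<open>0 < y\<close> \<open>0 < b\<close> unfolding cosh_p1w by (simp add: field_simps power2_eq_square)
  ultimately have "(p + 1)\<^sup>2 * y * (1 - b)\<^sup>2 \<le> p\<^sup>2 * (1 - y * b)\<^sup>2"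
    by linarith
  then show ?thesis
    unfolding b_def[symmetric] by (simp add: algebra_simps power2_eq_square)
qed

(* The variable a stands for |s| powr (\<beta> - 1); decoupling it from s makes h a quadratic form. *)
definition h_quadratic :: "real \<Rightarrow> real \<Rightarrow> real \<Rightarrow> real \<Rightarrow> real \<Rightarrow> real" where
  "h_quadratic D n a s x =
     D * (n * x)\<^sup>2 - (2 * (n - a)\<^sup>2 + D * (n\<^sup>2 + a\<^sup>2)) * s * x + D * (s * a)\<^sup>2"

lemma h_fun_eq_neg_h_quadratic:
  "h_fun \<beta> n t \<tau> = - h_quadratic (C_beta \<beta> - 2) (real n) (\<bar>\<tau>\<bar> powr (\<beta> - 1)) \<tau> t"
proof -
  have "\<bar>\<tau>\<bar> powr (2 * (\<beta> - 1)) = (\<bar>\<tau>\<bar> powr (\<beta> - 1))\<^sup>2"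
    by (simp add: power2_eq_square flip: powr_add)
  then show ?thesis
    unfolding h_fun_def h_quadratic_def by (simp add: power2_eq_square algebra_simps)
qed

lemma h_quadratic_abs_le:
  assumes "0 \<le> D"
  shows "h_quadratic D n a \<bar>s\<bar> \<bar>x\<bar> \<le> h_quadratic D n a s x"
proof -
  have "s * x \<le> \<bar>s\<bar> * \<bar>x\<bar>"
    by (simp add: abs_mult[symmetric])
  moreover have "0 \<le> 2 * (n - a)\<^sup>2 + D * (n\<^sup>2 + a\<^sup>2)"
    using assms by simp
  ultimately have "(2 * (n - a)\<^sup>2 + D * (n\<^sup>2 + a\<^sup>2)) * (s * x)
      \<le> (2 * (n - a)\<^sup>2 + D * (n\<^sup>2 + a\<^sup>2)) * (\<bar>s\<bar> * \<bar>x\<bar>)"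
    by (rule mult_left_mono)
  then show ?thesis
    unfolding h_quadratic_def by (simp add: power_mult_distrib mult.assoc)
qed

lemma quadratic_nonneg_beyond:
  fixes A B C N x :: real
  assumes "0 \<le> A" "0 < N" "C \<le> A * N\<^sup>2" "0 \<le> A * N\<^sup>2 - B * N + C" "N \<le> x"
  shows "0 \<le> A * x\<^sup>2 - B * x + C"
proof -
  have "B * N \<le> 2 * (A * N\<^sup>2)"
    using assms(3,4) by linarith
  also have "\<dots> = (2 * A * N) * N"
    by (simp add: power2_eq_square)
  finally have "B \<le> 2 * A * N"
    using \<open>0 < N\<close> by simp
  moreover have "A * (2 * N) \<le> A * (x + N)"
    using assms(1,5) by (intro mult_left_mono) simp_all
  ultimately have "0 \<le> (x - N) * (A * (x + N) - B)"
    using \<open>N \<le> x\<close> by simp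
  moreover have "A * x\<^sup>2 - B * x + C = (A * N\<^sup>2 - B * N + C) + (x - N) * (A * (x + N) - B)"
    by (simp add: power2_eq_square algebra_simps)
  ultimately show ?thesis
    using assms(4) by linarith
qed

lemma h_quadratic_nonneg_beyond:
  assumes "0 \<le> D" "0 < N" "0 \<le> s" "s \<le> N" "0 \<le> a" "a \<le> n"
    and "0 \<le> h_quadratic D n a s N" "N \<le> x"
  shows "0 \<le> h_quadratic D n a s x"
proof -
  define K where "K = 2 * (n - a)\<^sup>2 + D * (n\<^sup>2 + a\<^sup>2)"
  have h_eq: "h_quadratic D n a s X = (D * n\<^sup>2) * X\<^sup>2 - (K * s) * X + D * (s * a)\<^sup>2" for X
    by (simp add: h_quadratic_def K_def power_mult_distrib)
  have "s * a \<le> N * n"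
    using assms(2-6) by (intro mult_mono) simp_all
  then have "(s * a)\<^sup>2 \<le> (N * n)\<^sup>2"
    using assms(3,5) by (intro power_mono) simp_all
  then have C_bound: "D * (s * a)\<^sup>2 \<le> (D * n\<^sup>2) * N\<^sup>2"
    using assms(1) by (simp add: mult_left_mono power_mult_distrib mult_ac)
  have "0 \<le> D * n\<^sup>2"
    using assms(1) by simp
  from quadratic_nonneg_beyond[OF this \<open>0 < N\<close> C_bound assms(7)[unfolded h_eq] \<open>N \<le> x\<close>]
  show ?thesis
    unfolding h_eq .
qed

lemma h_quadratic_boundary_nonneg:
  fixes p y n N :: real
  assumes "0 < p" "0 < y" "y \<le> 1"
  shows "0 \<le> h_quadratic (2 * p\<^sup>2 / (2 * p + 1)) n (y powr p * n) (y * N) N"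
proof -
  define D where "D = 2 * p\<^sup>2 / (2 * p + 1)"
  define b where "b = y powr p"
  have "(2 * p + 1) * (2 * y * (1 - b)\<^sup>2) = 2 * ((2 * p + 1) * y * (1 - b)\<^sup>2)"
    by simp
  also have "\<dots> \<le> 2 * (p\<^sup>2 * (1 - y) * (1 - y * b\<^sup>2))"
    using sq_one_minus_powr_le[OF assms] by (simp add: b_def)
  also have "\<dots> = (2 * p + 1) * (D * (1 - y) * (1 - y * b\<^sup>2))"
    using \<open>0 < p\<close> by (simp add: D_def)
  finally have "2 * y * (1 - b)\<^sup>2 \<le> D * (1 - y) * (1 - y * b\<^sup>2)"
    using \<open>0 < p\<close> by simp
  moreover have "h_quadratic D n (b * n) (y * N) N
      = (n * N)\<^sup>2 * (D * (1 - y) * (1 - y * b\<^sup>2) - 2 * y * (1 - b)\<^sup>2)"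
    unfolding h_quadratic_def by algebra
  ultimately show ?thesis
    by (simp add: D_def b_def)
qed

lemma h_quadratic_nonneg:
  fixes p n s x :: real
  assumes "0 < p" "0 \<le> n" "0 \<le> s" "s \<le> n powr (1 / p)" "n powr (1 / p) \<le> x"
  shows "0 \<le> h_quadratic (2 * p\<^sup>2 / (2 * p + 1)) n (s powr p) s x"
proof (cases "s = 0")
  case True
  then show ?thesis
    using \<open>0 < p\<close> by (simp add: h_quadratic_def)
next
  case False
  define D where "D = 2 * p\<^sup>2 / (2 * p + 1)"
  define N where "N = n powr (1 / p)"
  define y where "y = s / N"
  have "s \<le> N"
    using assms(4) by (simp add: N_def)
  with False \<open>0 \<le> s\<close> have "0 < N"
    by linarith
  then have "N powr p = n"
    using \<open>0 < p\<close> \<open>0 \<le> n\<close> by (auto simp: N_def powr_powr)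
  have "0 < y" "y \<le> 1" "s = y * N"
    using False \<open>0 \<le> s\<close> \<open>s \<le> N\<close> \<open>0 < N\<close> by (simp_all add: y_def)
  then have s_powr_eq: "s powr p = y powr p * n"
    using \<open>N powr p = n\<close> by (simp add: powr_mult)
  have "0 \<le> D"
    using \<open>0 < p\<close> by (simp add: D_def)
  moreover have "0 \<le> h_quadratic D n (s powr p) s N"
    unfolding s_powr_eq using h_quadratic_boundary_nonneg[OF \<open>0 < p\<close> \<open>0 < y\<close> \<open>y \<le> 1\<close>]
    by (simp add: D_def \<open>s = y * N\<close>)
  moreover have "s powr p \<le> n"
    using \<open>0 < y\<close> \<open>y \<le> 1\<close> \<open>0 < p\<close> \<open>0 \<le> n\<close>
    by (simp add: s_powr_eq mult_left_le_one_le powr_le1)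
  ultimately show ?thesis
    using h_quadratic_nonneg_beyond[OF _ \<open>0 < N\<close> \<open>0 \<le> s\<close>] assms(4,5)
    by (simp add: D_def N_def)
qed

theorem lemma4p1:
  fixes \<beta> t \<tau> :: real and n :: nat
  assumes "\<beta> > 1"
    and "\<bar>t\<bar> > real n powr (1 / (\<beta> - 1))"
    and "\<bar>\<tau>\<bar> \<le> real n powr (1 / (\<beta> - 1))"
  shows "h_fun \<beta> n t \<tau> \<le> 0"
proof -
  define p where "p = \<beta> - 1"
  have "0 < p"
    using assms(1) by (simp add: p_def)
  have D_eq: "C_beta \<beta> - 2 = 2 * p\<^sup>2 / (2 * p + 1)"
    by (simp add: C_beta_def p_def)
  have "0 \<le> h_quadratic (C_beta \<beta> - 2) n (\<bar>\<tau>\<bar> powr p) \<bar>\<tau>\<bar> \<bar>t\<bar>"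
    unfolding D_eq using h_quadratic_nonneg[OF \<open>0 < p\<close>] assms(2,3)
    by (simp add: p_def less_imp_le)
  also have "\<dots> \<le> h_quadratic (C_beta \<beta> - 2) n (\<bar>\<tau>\<bar> powr p) \<tau> t"
    using \<open>0 < p\<close> by (intro h_quadratic_abs_le) (simp add: D_eq)
  finally show ?thesis
    by (simp add: h_fun_eq_neg_h_quadratic p_def)
qed

end
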